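(* Let $Y\subset\mathbb{R}^n$ be open, and let $\omega\colon Y\to\mathbb{R}^n$, $f\colon Y\to\mathbb{R}^n$, $F\colon Y\to\mathbb{R}$, $H\colon Y\to\mathbb{R}^{n\times m}$, $g\colon Y\to\mathbb{R}^m$, $f^{\mathrm{num}}\colon Y\times Y\to\mathbb{R}^n$ be arbitrary with $f^{\mathrm{num}}(u,u)=f(u)$. Then the following are equivalent: (A) there exists $F^{\mathrm{num}}\colon Y\times Y\to\mathbb{R}$ with $F^{\mathrm{num}}(u,u)=F(u)$ such that for all $u_-,u_0,u_+\in Y$, $$\omega(u_0)\cdot\Big(f^{\mathrm{num}}(u_0,u_+)-f^{\mathrm{num}}(u_-,u_0)+\tfrac12 H(u_0)\big(g(u_+)-g(u_0)\big)+\tfrac12 H(u_0)\big(g(u_0)-g(u_-)\big)\Big)\ \ge\ F^{\mathrm{num}}(u_0,u_+)-F^{\mathrm{num}}(u_-,u_0);$$ (B) for all $u_-,u_+\in Y$, $$[\![\omega]\!]\cdot f^{\mathrm{num}}(u_-,u_+)-\{\{\omega\cdot H\}\}\,[\![g]\!]\ \le\ [\![\omega\cdot f-F]\!],$$ where $\omega\cdot H$ denotes the row vector $\omega^TH\in\mathbb{R}^{1\times m}$. Moreover, there exists a consistent $F^{\mathrm{num}}$ with equality in (A) for all triples iff (B) holds with equality for all pairs, and then $$F^{\mathrm{num}}=\{\{F\}\}+\{\{\omega\}\}\cdot f^{\mathrm{num}}-\{\{\omega\cdot f\}\}-\tfrac14[\![\omega\cdot H]\!]\,[\![g]\!].$$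
   Context: For a function $a$ on $Y$ and states $u_\pm$: $\{\{a\}\}=\tfrac12(a(u_-)+a(u_+))$, $[\![a]\!]=a(u_+)-a(u_-)$; numerical fluxes are evaluated at $(u_-,u_+)$. *)

theory Defs
  imports "HOL-Analysis.Analysis"
begin

end

theory Submission
  imports Defs
begin

text \<open>
  Split the cell term of (A) into the contributions of its two interfaces: at an interface with
  left state \<open>a\<close> and right state \<open>b\<close>, the left cell sees
  \<open>P a b = \<omega> a \<bullet> (fnum a b + H a (g b - g a) / 2)\<close> and the right cell sees
  \<open>Q a b = \<omega> b \<bullet> (fnum a b - H b (g b - g a) / 2)\<close>.  Then (A) says
  \<open>Q a b - Fnum a b \<le> P b c - Fnum b c\<close> for all \<open>a, b, c\<close>, and (B) is exactly
  \<open>Q a b - P a b \<le> [\<omega> \<bullet> f - F]\<close>.  The triples \<open>(a, a, b)\<close> and \<open>(a, b, b)\<close> give (B) from (A),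
  while \<open>Fnum a b = P a b - P a a + F a\<close> gives (A) from (B).  In the case of equality both
  triples determine \<open>Fnum\<close>, and averaging them yields the stated formula.
\<close>

definition left_cell_flux ::
    "(real^'n \<Rightarrow> real^'n) \<Rightarrow> (real^'n \<Rightarrow> real^'n \<Rightarrow> real^'n) \<Rightarrow> (real^'n \<Rightarrow> real^'m^'n)
      \<Rightarrow> (real^'n \<Rightarrow> real^'m) \<Rightarrow> real^'n \<Rightarrow> real^'n \<Rightarrow> real" where
  "left_cell_flux \<omega> fnum H g a b = \<omega> a \<bullet> fnum a b + (1/2) * ((\<omega> a v* H a) \<bullet> (g b - g a))"

definition right_cell_flux ::
    "(real^'n \<Rightarrow> real^'n) \<Rightarrow> (real^'n \<Rightarrow> real^'n \<Rightarrow> real^'n) \<Rightarrow> (real^'n \<Rightarrow> real^'m^'n)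
      \<Rightarrow> (real^'n \<Rightarrow> real^'m) \<Rightarrow> real^'n \<Rightarrow> real^'n \<Rightarrow> real" where
  "right_cell_flux \<omega> fnum H g a b = \<omega> b \<bullet> fnum a b - (1/2) * ((\<omega> b v* H b) \<bullet> (g b - g a))"

lemma cell_term_eq_interface_fluxes:
  "\<omega> u0 \<bullet> (fnum u0 up - fnum um u0
      + (1/2) *\<^sub>R (H u0 *v (g up - g u0)) + (1/2) *\<^sub>R (H u0 *v (g u0 - g um)))
   = left_cell_flux \<omega> fnum H g u0 up - right_cell_flux \<omega> fnum H g um u0"
  by (simp add: left_cell_flux_def right_cell_flux_def dot_lmul_matrix
      inner_add_right inner_diff_right algebra_simps)

lemma interface_term_eq_flux_difference:
  "(\<omega> up - \<omega> um) \<bullet> fnum um up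
     - ((1/2) *\<^sub>R (\<omega> um v* H um + \<omega> up v* H up)) \<bullet> (g up - g um)
   = right_cell_flux \<omega> fnum H g um up - left_cell_flux \<omega> fnum H g um up"
  by (simp add: left_cell_flux_def right_cell_flux_def inner_add_left inner_diff_left
      algebra_simps)

lemma interface_formula_eq_flux_average:
  "(F um + F up) / 2
     + ((1/2) *\<^sub>R (\<omega> um + \<omega> up)) \<bullet> fnum um up
     - (\<omega> um \<bullet> f um + \<omega> up \<bullet> f up) / 2
     - (1/4) * ((\<omega> up v* H up - \<omega> um v* H um) \<bullet> (g up - g um))
   = (F um + F up + left_cell_flux \<omega> fnum H g um up + right_cell_flux \<omega> fnum H g um up
       - \<omega> um \<bullet> f um - \<omega> up \<bullet> f up) / 2"
  by (simp add: left_cell_flux_def right_cell_flux_def inner_add_left inner_diff_left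
      field_simps)

lemma cell_fluxes_diag:
  assumes "fnum u u = f u"
  shows "left_cell_flux \<omega> fnum H g u u = \<omega> u \<bullet> f u"
    and "right_cell_flux \<omega> fnum H g u u = \<omega> u \<bullet> f u"
  using assms by (simp_all add: left_cell_flux_def right_cell_flux_def)

lemma exists_consistent_flux_le_iff:
  fixes P Q :: "'a \<Rightarrow> 'a \<Rightarrow> 'b::ordered_ab_group_add"
  assumes P_diag: "\<And>u. u \<in> Y \<Longrightarrow> P u u = e u"
    and Q_diag: "\<And>u. u \<in> Y \<Longrightarrow> Q u u = e u"
  shows "(\<exists>Fn. (\<forall>u\<in>Y. Fn u u = F u) \<and>
            (\<forall>a\<in>Y. \<forall>b\<in>Y. \<forall>c\<in>Y. P b c - Q a b \<ge> Fn b c - Fn a b))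
    \<longleftrightarrow> (\<forall>a\<in>Y. \<forall>b\<in>Y. Q a b - P a b \<le> (e b - F b) - (e a - F a))"
proof
  assume "\<exists>Fn. (\<forall>u\<in>Y. Fn u u = F u) \<and>
            (\<forall>a\<in>Y. \<forall>b\<in>Y. \<forall>c\<in>Y. P b c - Q a b \<ge> Fn b c - Fn a b)"
  then obtain Fn where Fn_diag: "\<forall>u\<in>Y. Fn u u = F u"
    and cell: "\<forall>a\<in>Y. \<forall>b\<in>Y. \<forall>c\<in>Y. P b c - Q a b \<ge> Fn b c - Fn a b"
    by blast
  show "\<forall>a\<in>Y. \<forall>b\<in>Y. Q a b - P a b \<le> (e b - F b) - (e a - F a)"
  proof (intro ballI)
    fix a b assume "a \<in> Y" "b \<in> Y"
    with cell have "P a b - Q a a \<ge> Fn a b - Fn a a" and "P b b - Q a b \<ge> Fn b b - Fn a b"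
      by blast+
    then have "(P a b - Q a a) + (P b b - Q a b) \<ge> (Fn a b - Fn a a) + (Fn b b - Fn a b)"
      by (rule add_mono)
    with \<open>a \<in> Y\<close> \<open>b \<in> Y\<close> show "Q a b - P a b \<le> (e b - F b) - (e a - F a)"
      by (simp add: Fn_diag P_diag Q_diag algebra_simps)
  qed
next
  assume jump: "\<forall>a\<in>Y. \<forall>b\<in>Y. Q a b - P a b \<le> (e b - F b) - (e a - F a)"
  define Fn where "Fn a b = P a b - e a + F a" for a b
  have "\<forall>a\<in>Y. \<forall>b\<in>Y. \<forall>c\<in>Y. P b c - Q a b \<ge> Fn b c - Fn a b"
    using jump by (auto simp: Fn_def P_diag algebra_simps)
  moreover have "\<forall>u\<in>Y. Fn u u = F u"
    by (simp add: Fn_def P_diag)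
  ultimately show "\<exists>Fn. (\<forall>u\<in>Y. Fn u u = F u) \<and>
            (\<forall>a\<in>Y. \<forall>b\<in>Y. \<forall>c\<in>Y. P b c - Q a b \<ge> Fn b c - Fn a b)"
    by blast
qed

lemma exists_consistent_flux_eq_iff:
  fixes P Q :: "'a \<Rightarrow> 'a \<Rightarrow> 'b::ab_group_add"
  assumes P_diag: "\<And>u. u \<in> Y \<Longrightarrow> P u u = e u"
    and Q_diag: "\<And>u. u \<in> Y \<Longrightarrow> Q u u = e u"
  shows "(\<exists>Fn. (\<forall>u\<in>Y. Fn u u = F u) \<and>
            (\<forall>a\<in>Y. \<forall>b\<in>Y. \<forall>c\<in>Y. P b c - Q a b = Fn b c - Fn a b))
    \<longleftrightarrow> (\<forall>a\<in>Y. \<forall>b\<in>Y. Q a b - P a b = (e b - F b) - (e a - F a))"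
proof
  assume "\<exists>Fn. (\<forall>u\<in>Y. Fn u u = F u) \<and>
            (\<forall>a\<in>Y. \<forall>b\<in>Y. \<forall>c\<in>Y. P b c - Q a b = Fn b c - Fn a b)"
  then obtain Fn where Fn_diag: "\<forall>u\<in>Y. Fn u u = F u"
    and cell: "\<forall>a\<in>Y. \<forall>b\<in>Y. \<forall>c\<in>Y. P b c - Q a b = Fn b c - Fn a b"
    by blast
  show "\<forall>a\<in>Y. \<forall>b\<in>Y. Q a b - P a b = (e b - F b) - (e a - F a)"
  proof (intro ballI)
    fix a b assume "a \<in> Y" "b \<in> Y"
    with cell have "(P a b - Q a a) + (P b b - Q a b) = (Fn a b - Fn a a) + (Fn b b - Fn a b)"
      by simp
    with \<open>a \<in> Y\<close> \<open>b \<in> Y\<close> show "Q a b - P a b = (e b - F b) - (e a - F a)"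
      by (simp add: Fn_diag P_diag Q_diag algebra_simps)
  qed
next
  assume jump: "\<forall>a\<in>Y. \<forall>b\<in>Y. Q a b - P a b = (e b - F b) - (e a - F a)"
  define Fn where "Fn a b = P a b - e a + F a" for a b
  have "\<forall>a\<in>Y. \<forall>b\<in>Y. \<forall>c\<in>Y. P b c - Q a b = Fn b c - Fn a b"
    using jump by (auto simp: Fn_def P_diag algebra_simps)
  moreover have "\<forall>u\<in>Y. Fn u u = F u"
    by (simp add: Fn_def P_diag)
  ultimately show "\<exists>Fn. (\<forall>u\<in>Y. Fn u u = F u) \<and>
            (\<forall>a\<in>Y. \<forall>b\<in>Y. \<forall>c\<in>Y. P b c - Q a b = Fn b c - Fn a b)"
    by blast
qed

lemma consistent_flux_eq_average:
  fixes P Q :: "'a \<Rightarrow> 'a \<Rightarrow> 'b::field_char_0"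
  assumes P_diag: "\<And>u. u \<in> Y \<Longrightarrow> P u u = e u"
    and Q_diag: "\<And>u. u \<in> Y \<Longrightarrow> Q u u = e u"
    and Fn_diag: "\<forall>u\<in>Y. Fn u u = F u"
    and cell: "\<forall>a\<in>Y. \<forall>b\<in>Y. \<forall>c\<in>Y. P b c - Q a b = Fn b c - Fn a b"
    and "a \<in> Y" "b \<in> Y"
  shows "Fn a b = (F a + F b + P a b + Q a b - e a - e b) / 2"
proof -
  from cell \<open>a \<in> Y\<close> \<open>b \<in> Y\<close>
  have "(P a b - Q a a) - (P b b - Q a b) = (Fn a b - Fn a a) - (Fn b b - Fn a b)"
    by simp
  then have "2 * Fn a b = F a + F b + P a b + Q a b - e a - e b"
    using \<open>a \<in> Y\<close> \<open>b \<in> Y\<close> by (simp add: Fn_diag P_diag Q_diag algebra_simps)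
  then show ?thesis
    by (simp add: field_simps)
qed

theorem mainTheorem4:
  fixes Y :: "(real^'n) set"
    and \<omega> f :: "real^'n \<Rightarrow> real^'n"
    and F :: "real^'n \<Rightarrow> real"
    and H :: "real^'n \<Rightarrow> real^'m^'n"
    and g :: "real^'n \<Rightarrow> real^'m"
    and fnum :: "real^'n \<Rightarrow> real^'n \<Rightarrow> real^'n"
  assumes "open Y"
    and "\<And>u. u \<in> Y \<Longrightarrow> fnum u u = f u"
  shows
   "((\<exists>Fnum :: real^'n \<Rightarrow> real^'n \<Rightarrow> real.
        (\<forall>u\<in>Y. Fnum u u = F u) \<and>
        (\<forall>um\<in>Y. \<forall>u0\<in>Y. \<forall>up\<in>Y.
           \<omega> u0 \<bullet> (fnum u0 up - fnum um u0
              + (1/2) *\<^sub>R (H u0 *v (g up - g u0))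
              + (1/2) *\<^sub>R (H u0 *v (g u0 - g um)))
           \<ge> Fnum u0 up - Fnum um u0))
     \<longleftrightarrow>
     (\<forall>um\<in>Y. \<forall>up\<in>Y.
        (\<omega> up - \<omega> um) \<bullet> fnum um up
        - ((1/2) *\<^sub>R (\<omega> um v* H um + \<omega> up v* H up)) \<bullet> (g up - g um)
        \<le> (\<omega> up \<bullet> f up - F up) - (\<omega> um \<bullet> f um - F um)))
  \<and>
   ((\<exists>Fnum :: real^'n \<Rightarrow> real^'n \<Rightarrow> real.
        (\<forall>u\<in>Y. Fnum u u = F u) \<and>
        (\<forall>um\<in>Y. \<forall>u0\<in>Y. \<forall>up\<in>Y.
           \<omega> u0 \<bullet> (fnum u0 up - fnum um u0
              + (1/2) *\<^sub>R (H u0 *v (g up - g u0))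
              + (1/2) *\<^sub>R (H u0 *v (g u0 - g um)))
           = Fnum u0 up - Fnum um u0))
     \<longleftrightarrow>
     (\<forall>um\<in>Y. \<forall>up\<in>Y.
        (\<omega> up - \<omega> um) \<bullet> fnum um up
        - ((1/2) *\<^sub>R (\<omega> um v* H um + \<omega> up v* H up)) \<bullet> (g up - g um)
        = (\<omega> up \<bullet> f up - F up) - (\<omega> um \<bullet> f um - F um)))
  \<and>
   (\<forall>Fnum :: real^'n \<Rightarrow> real^'n \<Rightarrow> real.
        (\<forall>u\<in>Y. Fnum u u = F u) \<and>
        (\<forall>um\<in>Y. \<forall>u0\<in>Y. \<forall>up\<in>Y.
           \<omega> u0 \<bullet> (fnum u0 up - fnum um u0
              + (1/2) *\<^sub>R (H u0 *v (g up - g u0))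
              + (1/2) *\<^sub>R (H u0 *v (g u0 - g um)))
           = Fnum u0 up - Fnum um u0)
      \<longrightarrow>
      (\<forall>um\<in>Y. \<forall>up\<in>Y.
         Fnum um up =
           (F um + F up) / 2
           + ((1/2) *\<^sub>R (\<omega> um + \<omega> up)) \<bullet> fnum um up
           - (\<omega> um \<bullet> f um + \<omega> up \<bullet> f up) / 2
           - (1/4) * ((\<omega> up v* H up - \<omega> um v* H um) \<bullet> (g up - g um))))"
proof -
  let ?P = "left_cell_flux \<omega> fnum H g" and ?Q = "right_cell_flux \<omega> fnum H g"
  have P_diag: "?P u u = \<omega> u \<bullet> f u" and Q_diag: "?Q u u = \<omega> u \<bullet> f u" if "u \<in> Y" for u
    using assms(2)[OF that] by (simp_all add: cell_fluxes_diag)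
  show ?thesis
    unfolding cell_term_eq_interface_fluxes interface_term_eq_flux_difference
      interface_formula_eq_flux_average
    using exists_consistent_flux_le_iff[of Y ?P "\<lambda>u. \<omega> u \<bullet> f u" ?Q F, OF P_diag Q_diag]
      exists_consistent_flux_eq_iff[of Y ?P "\<lambda>u. \<omega> u \<bullet> f u" ?Q F, OF P_diag Q_diag]
      consistent_flux_eq_average[of Y ?P "\<lambda>u. \<omega> u \<bullet> f u" ?Q, OF P_diag Q_diag]
    by blast
qed

end
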